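(* For every $\lambda\in\mathbb C$ and every integer $d>1$ there exists a real matrix $M$ with all entries non-negative whose Jordan decomposition contains a Jordan block with eigenvalue $\lambda$ of size $d$. *)

theory Defs
  imports Complex_Main "Jordan_Normal_Form.Jordan_Normal_Form"
begin

end

theory Submission
  imports Defs "Jordan_Normal_Form.Jordan_Normal_Form_Existence"
begin

text \<open>The Jordan block \<open>J\<^sub>d(\<lambda>)\<close> together with \<open>J\<^sub>d(cnj \<lambda>)\<close> is the complex Jordan form of the real
  \<open>2d \<times> 2d\<close> matrix \<open>R = [[J\<^sub>d(Re \<lambda>), -Im \<lambda> I], [Im \<lambda> I, J\<^sub>d(Re \<lambda>)]]\<close>. Write \<open>R = R\<^sup>+ - R\<^sup>-\<close>
  with entrywise non-negative \<open>R\<^sup>+\<close>, \<open>R\<^sup>-\<close>. The non-negative matrix \<open>[[R\<^sup>+, R\<^sup>-], [R\<^sup>-, R\<^sup>+]]\<close>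
  is similar to \<open>diag(R\<^sup>+ + R\<^sup>-, R\<^sup>+ - R\<^sup>-)\<close>, so its Jordan form contains that of \<open>R\<close>.\<close>

lemma similar_mat_four_block_symmetric:
  fixes X Y :: "'a :: field_char_0 mat"
  assumes X: "X \<in> carrier_mat n n" and Y: "Y \<in> carrier_mat n n"
  shows "similar_mat (four_block_mat X Y Y X)
    (four_block_mat (X + Y) (0\<^sub>m n n) (0\<^sub>m n n) (X - Y))"
proof -
  define I :: "'a mat" where "I = 1\<^sub>m n"
  define P where "P = four_block_mat I I I (- I)"
  define Q where "Q = four_block_mat ((1/2) \<cdot>\<^sub>m I) ((1/2) \<cdot>\<^sub>m I) ((1/2) \<cdot>\<^sub>m I) ((- 1/2) \<cdot>\<^sub>m I)"
  have I: "I \<in> carrier_mat n n" "\<And>c. c \<cdot>\<^sub>m I \<in> carrier_mat n n" "- I \<in> carrier_mat n n"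
    by (auto simp: I_def)
  have XY: "X + Y \<in> carrier_mat n n" "X - Y \<in> carrier_mat n n" "Y - X \<in> carrier_mat n n"
    using X Y by auto
  have "P * Q = 1\<^sub>m (n + n)"
    unfolding P_def Q_def mult_four_block_mat[OF I(1,1,1,3) I(2,2,2,2)]
    by (rule eq_matI) (auto simp: I_def)
  moreover have "Q * P = 1\<^sub>m (n + n)"
    unfolding P_def Q_def mult_four_block_mat[OF I(2,2,2,2) I(1,1,1,3)]
    by (rule eq_matI) (auto simp: I_def)
  moreover have "P * four_block_mat (X + Y) (0\<^sub>m n n) (0\<^sub>m n n) (X - Y)
      = four_block_mat (X + Y) (X - Y) (X + Y) (Y - X)"
    unfolding P_def mult_four_block_mat[OF I(1,1,1,3) XY(1) zero_carrier_mat zero_carrier_mat XY(2)]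
    by (rule eq_matI) (use X Y in \<open>auto simp: I_def\<close>)
  moreover have "four_block_mat (X + Y) (X - Y) (X + Y) (Y - X) * Q = four_block_mat X Y Y X"
    unfolding Q_def mult_four_block_mat[OF XY(1,2,1,3) I(2,2,2,2)]
    by (rule eq_matI) (use X Y in \<open>auto simp: I_def algebra_simps\<close>)
  ultimately show ?thesis
    using X Y by (intro similar_matI[of _ _ P Q "n + n"]) (auto simp: P_def Q_def I_def)
qed

lemma similar_mat_four_block_rotation:
  fixes X :: "complex mat" and c :: complex
  assumes X: "X \<in> carrier_mat n n"
  shows "similar_mat (four_block_mat X ((- c) \<cdot>\<^sub>m 1\<^sub>m n) (c \<cdot>\<^sub>m 1\<^sub>m n) X)
    (four_block_mat (X + (\<i> * c) \<cdot>\<^sub>m 1\<^sub>m n) (0\<^sub>m n n) (0\<^sub>m n n) (X - (\<i> * c) \<cdot>\<^sub>m 1\<^sub>m n))"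
proof -
  define I :: "complex mat" where "I = 1\<^sub>m n"
  define U where "U = X + (\<i> * c) \<cdot>\<^sub>m I"
  define V where "V = X - (\<i> * c) \<cdot>\<^sub>m I"
  define P where "P = four_block_mat I I ((- \<i>) \<cdot>\<^sub>m I) (\<i> \<cdot>\<^sub>m I)"
  define Q where "Q = four_block_mat ((1/2) \<cdot>\<^sub>m I) ((\<i>/2) \<cdot>\<^sub>m I) ((1/2) \<cdot>\<^sub>m I) ((- \<i>/2) \<cdot>\<^sub>m I)"
  have I: "I \<in> carrier_mat n n" "\<And>c. c \<cdot>\<^sub>m I \<in> carrier_mat n n"
    by (auto simp: I_def)
  have UV: "U \<in> carrier_mat n n" "V \<in> carrier_mat n n" "\<And>c. c \<cdot>\<^sub>m U \<in> carrier_mat n n"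
    "\<And>c. c \<cdot>\<^sub>m V \<in> carrier_mat n n"
    using X by (auto simp: U_def V_def I_def)
  have "P * Q = 1\<^sub>m (n + n)"
    unfolding P_def Q_def mult_four_block_mat[OF I(1,1,2,2) I(2,2,2,2)]
    by (rule eq_matI) (auto simp: I_def field_simps)
  moreover have "Q * P = 1\<^sub>m (n + n)"
    unfolding P_def Q_def mult_four_block_mat[OF I(2,2,2,2) I(1,1,2,2)]
    by (rule eq_matI) (auto simp: I_def field_simps)
  moreover have "P * four_block_mat U (0\<^sub>m n n) (0\<^sub>m n n) V
      = four_block_mat U V ((- \<i>) \<cdot>\<^sub>m U) (\<i> \<cdot>\<^sub>m V)"
    unfolding P_def mult_four_block_mat[OF I(1,1,2,2) UV(1) zero_carrier_mat zero_carrier_mat UV(2)]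
    using UV(1,2) carrier_matD[OF UV(1)] carrier_matD[OF UV(2)]
    by (simp add: I_def mult_smult_assoc_mat[OF one_carrier_mat UV(1)]
        mult_smult_assoc_mat[OF one_carrier_mat UV(2)])
  moreover have "four_block_mat U V ((- \<i>) \<cdot>\<^sub>m U) (\<i> \<cdot>\<^sub>m V) * Q
      = four_block_mat X ((- c) \<cdot>\<^sub>m I) (c \<cdot>\<^sub>m I) X"
    unfolding Q_def mult_four_block_mat[OF UV(1,2,3,4) I(2,2,2,2)]
    by (rule eq_matI) (use X in \<open>auto simp: U_def V_def I_def field_simps\<close>)
  ultimately show ?thesis
    using X UV unfolding I_def[symmetric] U_def[symmetric] V_def[symmetric]
    by (intro similar_matI[of _ _ P Q "n + n"]) (auto simp: P_def Q_def I_def)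
qed

lemma jordan_nf_similar: "similar_mat A B \<Longrightarrow> jordan_nf B n_as \<Longrightarrow> jordan_nf A n_as"
  unfolding jordan_nf_def using similar_mat_trans by blast

lemma jordan_nf_four_block_0_0:
  assumes "jordan_nf A n_as" and "jordan_nf B m_bs"
    and "A \<in> carrier_mat n n" and "B \<in> carrier_mat m m"
  shows "jordan_nf (four_block_mat A (0\<^sub>m n m) (0\<^sub>m m n) B) (n_as @ m_bs)"
proof -
  have "diag_block_mat [A, B] = four_block_mat A (0\<^sub>m n m) (0\<^sub>m m n) B"
    unfolding diag_block_mat.simps(2)[of A "[B]"] diag_block_mat_singleton Let_def
    using assms(3,4) by auto
  then show ?thesis
    using jordan_nf_diag_block_mat[of "[(A, n_as), (B, m_bs)]"] assms(1,2) by auto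
qed

lemma jordan_nf_jordan_block: "n > 0 \<Longrightarrow> jordan_nf (jordan_block n a) [(n, a)]"
  unfolding jordan_nf_def jordan_matrix_def list.map prod.case diag_block_mat_singleton
  by (auto intro: similar_mat_refl[of _ n])

definition real_jordan_block :: "nat \<Rightarrow> complex \<Rightarrow> real mat" where
  "real_jordan_block n z = four_block_mat (jordan_block n (Re z))
     ((- Im z) \<cdot>\<^sub>m 1\<^sub>m n) (Im z \<cdot>\<^sub>m 1\<^sub>m n) (jordan_block n (Re z))"

lemma real_jordan_block_carrier: "real_jordan_block n z \<in> carrier_mat (n + n) (n + n)"
  unfolding real_jordan_block_def by auto

lemma jordan_nf_real_jordan_block:
  assumes "n > 0"
  shows "jordan_nf (map_mat complex_of_real (real_jordan_block n z)) [(n, z), (n, cnj z)]"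
proof -
  define X where "X = jordan_block n (complex_of_real (Re z))"
  have X: "X \<in> carrier_mat n n"
    unfolding X_def by auto
  have "map_mat complex_of_real (real_jordan_block n z)
      = four_block_mat X ((- complex_of_real (Im z)) \<cdot>\<^sub>m 1\<^sub>m n) (complex_of_real (Im z) \<cdot>\<^sub>m 1\<^sub>m n) X"
    by (rule eq_matI) (auto simp: real_jordan_block_def X_def)
  moreover have "X + (\<i> * complex_of_real (Im z)) \<cdot>\<^sub>m 1\<^sub>m n = jordan_block n z"
    and "X - (\<i> * complex_of_real (Im z)) \<cdot>\<^sub>m 1\<^sub>m n = jordan_block n (cnj z)"
    by (auto intro!: eq_matI simp: X_def complex_eq_iff)
  ultimately have "similar_mat (map_mat complex_of_real (real_jordan_block n z))
      (four_block_mat (jordan_block n z) (0\<^sub>m n n) (0\<^sub>m n n) (jordan_block n (cnj z)))"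
    using similar_mat_four_block_rotation[OF X] by metis
  moreover have "jordan_nf (four_block_mat (jordan_block n z) (0\<^sub>m n n) (0\<^sub>m n n) (jordan_block n (cnj z)))
      [(n, z), (n, cnj z)]"
    using jordan_nf_four_block_0_0[OF jordan_nf_jordan_block[OF assms] jordan_nf_jordan_block[OF assms],
        where n = n and m = n]
    by simp
  ultimately show ?thesis
    by (rule jordan_nf_similar)
qed

definition nonneg_dilation :: "real mat \<Rightarrow> real mat" where
  "nonneg_dilation A =
    (let P = map_mat (\<lambda>x. max x 0) A; N = map_mat (\<lambda>x. max (- x) 0) A in four_block_mat P N N P)"

lemma nonneg_dilation_carrier:
  "A \<in> carrier_mat n n \<Longrightarrow> nonneg_dilation A \<in> carrier_mat (n + n) (n + n)"
  unfolding nonneg_dilation_def Let_def by auto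

lemma nonneg_dilation_nonneg:
  assumes "A \<in> carrier_mat n n" and "i < n + n" and "j < n + n"
  shows "nonneg_dilation A $$ (i, j) \<ge> 0"
  using assms unfolding nonneg_dilation_def Let_def by auto

lemma jordan_nf_nonneg_dilation:
  assumes A: "A \<in> carrier_mat n n" and jnf: "jordan_nf (map_mat complex_of_real A) n_as"
  shows "\<exists>m_bs. jordan_nf (map_mat complex_of_real (nonneg_dilation A)) (m_bs @ n_as)"
proof -
  define P where "P = map_mat (\<lambda>x. complex_of_real (max x 0)) A"
  define N where "N = map_mat (\<lambda>x. complex_of_real (max (- x) 0)) A"
  have PN: "P \<in> carrier_mat n n" "N \<in> carrier_mat n n" "P + N \<in> carrier_mat n n"
    using A by (auto simp: P_def N_def)
  have "map_mat complex_of_real (nonneg_dilation A) = four_block_mat P N N P"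
    by (rule eq_matI) (use A in \<open>auto simp: nonneg_dilation_def Let_def P_def N_def\<close>)
  moreover have "P - N = map_mat complex_of_real A"
    by (rule eq_matI) (use A in \<open>auto simp: P_def N_def max_def\<close>)
  ultimately have sim: "similar_mat (map_mat complex_of_real (nonneg_dilation A))
      (four_block_mat (P + N) (0\<^sub>m n n) (0\<^sub>m n n) (map_mat complex_of_real A))"
    using similar_mat_four_block_symmetric[OF PN(1,2)] by metis
  obtain m_bs where "jordan_nf (P + N) m_bs"
    using jordan_nf_exists[OF PN(3)] char_poly_factorized[OF PN(3)] by blast
  then have "jordan_nf (four_block_mat (P + N) (0\<^sub>m n n) (0\<^sub>m n n) (map_mat complex_of_real A))
      (m_bs @ n_as)"
    using jnf PN(3) A by (intro jordan_nf_four_block_0_0) auto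
  then show ?thesis
    using sim jordan_nf_similar by blast
qed

theorem lemma8:
  fixes lam :: complex and d :: nat
  assumes "d > 1"
  shows "\<exists>(n::nat) (M::real mat). M \<in> carrier_mat n n
           \<and> (\<forall>i<n. \<forall>j<n. M $$ (i,j) \<ge> 0)
           \<and> (\<exists>n_as. jordan_nf (map_mat complex_of_real M) n_as \<and> (d, lam) \<in> set n_as)"
proof -
  let ?R = "real_jordan_block d lam"
  have R: "?R \<in> carrier_mat (d + d) (d + d)"
    by (rule real_jordan_block_carrier)
  have "jordan_nf (map_mat complex_of_real ?R) [(d, lam), (d, cnj lam)]"
    using assms by (intro jordan_nf_real_jordan_block) simp
  then obtain m_bs
    where "jordan_nf (map_mat complex_of_real (nonneg_dilation ?R)) (m_bs @ [(d, lam), (d, cnj lam)])"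
    using jordan_nf_nonneg_dilation[OF R] by blast
  then show ?thesis
    using nonneg_dilation_carrier[OF R] nonneg_dilation_nonneg[OF R]
    by (intro exI[of _ "(d + d) + (d + d)"] exI[of _ "nonneg_dilation ?R"]) auto
qed

end
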